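(* Under the hypotheses of the preceding result (a subsystem $(B-A)X=0$ of $Eq(\mathfrak g,\mathcal E)$ with $p$ equations, $\sum_t(B_t-A_t)=(1,\dots,1)$, and a permutation $\pi$ with permutation matrix $P$ such that the first $p-1$ rows of $PB-P^+A$ are nonnegative), assume moreover that $\ell=|Con(\mathfrak g,\mathcal E)|=3$, that the row $A_{\pi(1)}$ contains exactly one entry equal to $1$, and that $G$ contains no free subgroup of rank two. Then $\tau(G)=5$.
   Context: Configurations: for $\mathfrak g=(g_1,\dots,g_n)$ and a partition $\mathcal E=\{E_1,\dots,E_m\}$ of a group $G$, a configuration is $C=(c_0,\dots,c_n)\in\{1,\dots,m\}^{n+1}$ such that some $x\in G$ has $x\in E_{c_0}$ and $g_ix\in E_{c_i}$; $Con(\mathfrak g,\mathcal E)$ is the set of configurations. $Eq(\mathfrak g,\mathcal E)$: variables $f_C$, equations $\sum_{C:\,c_j=i}f_C=\sum_{C:\,c_k=i}f_C$ ($1\le i\le m$, $0\le j,k\le n$), each written $aX=bX$ with $a,b\in\{0,1\}^\ell$ indicator vectors; a subsystem is a finite list (repetitions allowed, sides may be swapped) of such equations $A_tX=B_tX$. Row $i$ of $PM$ is row $\pi(i)$ of $M$; $P^+$ is $P$ with rows cyclically shifted up by one (rows $P_2,\dots,P_p,P_1$). Tarski number $\tau(G)$: minimum of $r+s$ over complete paradoxical decompositions, i.e. partitions $\{A_1,\dots,A_r,B_1,\dots,B_s\}$ of $G$ with $a_i,b_j\in G$ such that $\{a_iA_i\}$ and $\{b_jB_j\}$ each partition $G$.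 *)

theory Defs
  imports "HOL-Algebra.Group" "HOL-Combinatorics.Permutations" "HOL-Library.Extended_Nat"
begin

definition is_partition :: "('a, 'b) monoid_scheme \<Rightarrow> (nat \<Rightarrow> 'a set) \<Rightarrow> nat \<Rightarrow> bool" where
  "is_partition G E m \<longleftrightarrow>
     (\<forall>i\<in>{1..m}. E i \<noteq> {} \<and> E i \<subseteq> carrier G) \<and>
     (\<forall>i\<in>{1..m}. \<forall>j\<in>{1..m}. i \<noteq> j \<longrightarrow> E i \<inter> E j = {}) \<and>
     (\<Union>i\<in>{1..m}. E i) = carrier G"

text \<open>Configurations: g = [g_1,...,g_n] (g_i = g ! (i-1)); a configuration is a list
  C = [c_0,...,c_n] with entries in {1..m} such that some x has x in E c_0 and g_i x in E c_i.\<close>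
definition Con :: "('a, 'b) monoid_scheme \<Rightarrow> 'a list \<Rightarrow> (nat \<Rightarrow> 'a set) \<Rightarrow> nat \<Rightarrow> nat list set" where
  "Con G g E m = {C. length C = Suc (length g) \<and> (\<forall>i<length C. C ! i \<in> {1..m}) \<and>
     (\<exists>x\<in>carrier G. x \<in> E (C ! 0) \<and>
        (\<forall>i\<in>{1..length g}. (g ! (i - 1)) \<otimes>\<^bsub>G\<^esub> x \<in> E (C ! i)))}"

text \<open>Vectors in the variables f_C are indexed by the configurations themselves.
  (a, b) is an equation a X = b X of Eq(g,E): for some i in {1..m} and j, k in {0..n},
  a and b are the indicator vectors of {C. c_j = i} and {C. c_k = i}.\<close>
definition is_Eq_equation :: "('a, 'b) monoid_scheme \<Rightarrow> 'a list \<Rightarrow> (nat \<Rightarrow> 'a set) \<Rightarrow> nat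
    \<Rightarrow> (nat list \<Rightarrow> int) \<Rightarrow> (nat list \<Rightarrow> int) \<Rightarrow> bool" where
  "is_Eq_equation G g E m a b \<longleftrightarrow>
     (\<exists>i\<in>{1..m}. \<exists>j\<le>length g. \<exists>k\<le>length g. \<forall>C\<in>Con G g E m.
        a C = (if C ! j = i then 1 else 0) \<and> b C = (if C ! k = i then 1 else 0))"

definition complete_paradoxical :: "('a, 'b) monoid_scheme \<Rightarrow> nat \<Rightarrow> nat \<Rightarrow> bool" where
  "complete_paradoxical G r s \<longleftrightarrow>
    (\<exists>A B :: nat \<Rightarrow> 'a set. \<exists>a b :: nat \<Rightarrow> 'a.
      (\<forall>i\<in>{1..r}. A i \<subseteq> carrier G \<and> a i \<in> carrier G) \<and>
      (\<forall>j\<in>{1..s}. B j \<subseteq> carrier G \<and> b j \<in> carrier G) \<and>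
      (\<forall>i\<in>{1..r}. \<forall>i'\<in>{1..r}. i \<noteq> i' \<longrightarrow> A i \<inter> A i' = {}) \<and>
      (\<forall>j\<in>{1..s}. \<forall>j'\<in>{1..s}. j \<noteq> j' \<longrightarrow> B j \<inter> B j' = {}) \<and>
      (\<forall>i\<in>{1..r}. \<forall>j\<in>{1..s}. A i \<inter> B j = {}) \<and>
      (\<Union>i\<in>{1..r}. A i) \<union> (\<Union>j\<in>{1..s}. B j) = carrier G \<and>
      (\<forall>i\<in>{1..r}. \<forall>i'\<in>{1..r}. i \<noteq> i' \<longrightarrow>
          ((\<otimes>\<^bsub>G\<^esub>) (a i) ` A i) \<inter> ((\<otimes>\<^bsub>G\<^esub>) (a i') ` A i') = {}) \<and>
      (\<Union>i\<in>{1..r}. (\<otimes>\<^bsub>G\<^esub>) (a i) ` A i) = carrier G \<and>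
      (\<forall>j\<in>{1..s}. \<forall>j'\<in>{1..s}. j \<noteq> j' \<longrightarrow>
          ((\<otimes>\<^bsub>G\<^esub>) (b j) ` B j) \<inter> ((\<otimes>\<^bsub>G\<^esub>) (b j') ` B j') = {}) \<and>
      (\<Union>j\<in>{1..s}. (\<otimes>\<^bsub>G\<^esub>) (b j) ` B j) = carrier G)"

text \<open>Tarski number (infinity if G admits no paradoxical decomposition).\<close>
definition tarski_number :: "('a, 'b) monoid_scheme \<Rightarrow> enat" where
  "tarski_number G = Inf {enat (r + s) | r s. complete_paradoxical G r s}"

text \<open>Words in two letters: (letter, inverted?), letter False = first generator.\<close>
fun eval_word :: "('a, 'b) monoid_scheme \<Rightarrow> 'a \<Rightarrow> 'a \<Rightarrow> (bool \<times> bool) list \<Rightarrow> 'a" where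
  "eval_word G x y [] = \<one>\<^bsub>G\<^esub>"
| "eval_word G x y ((l, e) # w) =
     (let z = (if l then y else x) in (if e then inv\<^bsub>G\<^esub> z else z)) \<otimes>\<^bsub>G\<^esub> eval_word G x y w"

fun reduced_word :: "(bool \<times> bool) list \<Rightarrow> bool" where
  "reduced_word [] = True"
| "reduced_word [_] = True"
| "reduced_word ((l, e) # (l', e') # w) = (\<not> (l = l' \<and> e \<noteq> e') \<and> reduced_word ((l', e') # w))"

definition has_free_subgroup_rank2 :: "('a, 'b) monoid_scheme \<Rightarrow> bool" where
  "has_free_subgroup_rank2 G \<longleftrightarrow>
     (\<exists>x\<in>carrier G. \<exists>y\<in>carrier G. \<forall>w. w \<noteq> [] \<and> reduced_word w \<longrightarrow> eval_word G x y w \<noteq> \<one>\<^bsub>G\<^esub>)"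

end

theory Submission
  imports Defs
begin

text \<open>
  Without free subgroups of rank two the Tarski number is at least 5: in a complete paradoxical
  decomposition with 2 + 2 pieces A1, A2, B1, B2 and translations a1, a2, b1, b2, the elements
  a1^-1 a2 and b1^-1 b2 play ping-pong on the four pieces.

  For the upper bound, each equation A_t X = B_t X of the subsystem is realised by a translation
  h_t: the entry of A_t at the configuration of x equals the entry of B_t at the configuration of
  h_t x. Read the rows of PB - P^+A, with the wrapped-around term dropped, as indicators of sets
  D_i. They cover G once and the set X where A_pi(1) = 1 a second time, and X splits into pieces
  Z_i with w_i Z_i = D_i, where w_i = h_pi(i) ... h_pi(1). As X is a single configuration class,
  it lies in one D_k; then Z_k and G - D_k form one side of a paradoxical decomposition, and the
  other Z_i together with D_k - X form the other side. Their translates are unions of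
  configuration classes, so at most 3 of them are nonempty: 3 + 2 pieces suffice.
\<close>

section \<open>Paradoxical decompositions\<close>

definition translates_partition ::
    "('a, 'b) monoid_scheme \<Rightarrow> 'i set \<Rightarrow> ('i \<Rightarrow> 'a set) \<Rightarrow> ('i \<Rightarrow> 'a) \<Rightarrow> bool" where
  "translates_partition G I P t \<longleftrightarrow>
     (\<forall>i\<in>I. t i \<in> carrier G) \<and>
     disjoint_family_on (\<lambda>i. (\<otimes>\<^bsub>G\<^esub>) (t i) ` P i) I \<and>
     (\<Union>i\<in>I. (\<otimes>\<^bsub>G\<^esub>) (t i) ` P i) = carrier G"

definition paradoxical_decomposition ::
    "('a, 'b) monoid_scheme \<Rightarrow> 'i set \<Rightarrow> 'j set \<Rightarrow> ('i \<Rightarrow> 'a set) \<Rightarrow> ('j \<Rightarrow> 'a set)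
       \<Rightarrow> ('i \<Rightarrow> 'a) \<Rightarrow> ('j \<Rightarrow> 'a) \<Rightarrow> bool" where
  "paradoxical_decomposition G I J A B a b \<longleftrightarrow>
     disjoint_family_on A I \<and> disjoint_family_on B J \<and>
     (\<Union>i\<in>I. A i) \<inter> (\<Union>j\<in>J. B j) = {} \<and>
     (\<Union>i\<in>I. A i) \<union> (\<Union>j\<in>J. B j) = carrier G \<and>
     translates_partition G I A a \<and> translates_partition G J B b"

lemma complete_paradoxical_iff:
  "complete_paradoxical G r s \<longleftrightarrow>
     (\<exists>A B a b. paradoxical_decomposition G {1..r} {1..s} A B a b)"
  unfolding complete_paradoxical_def paradoxical_decomposition_def translates_partition_def
    disjoint_family_on_def
  by (intro ex_cong1 iffI; elim conjE; intro conjI; fast)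

lemma paradoxical_decomposition_swap:
  "paradoxical_decomposition G I J A B a b \<Longrightarrow> paradoxical_decomposition G J I B A b a"
  unfolding paradoxical_decomposition_def by blast

context group
begin

lemma translate_image_eq_carrier:
  assumes "c \<in> carrier G" "S \<subseteq> carrier G" "(\<otimes>) c ` S = carrier G"
  shows "S = carrier G"
proof
  show "carrier G \<subseteq> S"
  proof
    fix y assume y: "y \<in> carrier G"
    then have "c \<otimes> y \<in> (\<otimes>) c ` S" using assms by simp
    then obtain z where "z \<in> S" "c \<otimes> y = c \<otimes> z" by blast
    then show "y \<in> S" using assms y by (metis Units_eq Units_l_cancel subsetD)
  qed
qed (fact assms(2))

lemma translate_preimage:
  assumes "c \<in> carrier G" "S \<subseteq> carrier G"
  shows "(\<otimes>) c ` {x \<in> carrier G. c \<otimes> x \<in> S} = S"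
proof (intro equalityI subsetI)
  fix y assume y: "y \<in> S"
  then have "inv c \<otimes> y \<in> {x \<in> carrier G. c \<otimes> x \<in> S}" and "c \<otimes> (inv c \<otimes> y) = y"
    using assms by (auto simp: m_assoc[symmetric])
  then show "y \<in> (\<otimes>) c ` {x \<in> carrier G. c \<otimes> x \<in> S}" by (metis image_eqI)
qed auto

lemma paradoxical_decomposition_index_nonempty:
  "paradoxical_decomposition G I J A B a b \<Longrightarrow> I \<noteq> {}"
  unfolding paradoxical_decomposition_def translates_partition_def by auto

text \<open>If all pieces but one of a side were empty, that piece would translate onto, hence
  be, the whole group, leaving nothing for the other side.\<close>
lemma paradoxical_decomposition_other_piece:
  assumes dec: "paradoxical_decomposition G I J A B a b" and i: "i \<in> I"
  shows "\<exists>i'\<in>I. i' \<noteq> i \<and> A i' \<noteq> {}"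
proof (rule ccontr)
  assume "\<not> ?thesis"
  then have others: "\<And>i'. i' \<in> I \<Longrightarrow> i' \<noteq> i \<Longrightarrow> A i' = {}" by blast
  have a: "a i \<in> carrier G" and cover_A: "(\<Union>i\<in>I. (\<otimes>) (a i) ` A i) = carrier G"
    and cover_B: "(\<Union>j\<in>J. (\<otimes>) (b j) ` B j) = carrier G"
    using dec i unfolding paradoxical_decomposition_def translates_partition_def by simp_all
  have Ai: "A i \<subseteq> carrier G" and AB: "(\<Union>i\<in>I. A i) \<inter> (\<Union>j\<in>J. B j) = {}"
    and BG: "(\<Union>j\<in>J. B j) \<subseteq> carrier G"
    using dec i unfolding paradoxical_decomposition_def by auto
  have "(\<Union>i\<in>I. (\<otimes>) (a i) ` A i) = (\<otimes>) (a i) ` A i"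
    using i others by auto
  then have "A i = carrier G"
    using translate_image_eq_carrier[OF a Ai] cover_A by simp
  then have "(\<Union>j\<in>J. B j) = {}" using AB BG i by blast
  then show False using cover_B by auto
qed

lemma complete_paradoxical_ge_2:
  assumes "complete_paradoxical G r s"
  shows "2 \<le> r" and "2 \<le> s"
proof -
  have "2 \<le> r" if "paradoxical_decomposition G {1..r} {1..r'} A B a b"
    for r r' :: nat and A B :: "nat \<Rightarrow> 'a set" and a b
  proof -
    have "1 \<in> {1..r}" using paradoxical_decomposition_index_nonempty[OF that] by simp
    then show ?thesis using paradoxical_decomposition_other_piece[OF that] by fastforce
  qed
  then show "2 \<le> r" "2 \<le> s"
    using assms paradoxical_decomposition_swap unfolding complete_paradoxical_iff by blast+
qed

end

section \<open>Ping-pong\<close>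

definition letter :: "('a, 'b) monoid_scheme \<Rightarrow> 'a \<Rightarrow> 'a \<Rightarrow> bool \<times> bool \<Rightarrow> 'a" where
  "letter G x y = (\<lambda>(l, e). let z = if l then y else x in if e then inv\<^bsub>G\<^esub> z else z)"

lemma eval_word_Cons_letter:
  "eval_word G x y (k # w) = letter G x y k \<otimes>\<^bsub>G\<^esub> eval_word G x y w"
  by (cases k) (simp add: letter_def)

context group
begin

lemma letter_closed: "x \<in> carrier G \<Longrightarrow> y \<in> carrier G \<Longrightarrow> letter G x y k \<in> carrier G"
  by (cases k) (simp add: letter_def Let_def)

lemma eval_word_closed: "x \<in> carrier G \<Longrightarrow> y \<in> carrier G \<Longrightarrow> eval_word G x y w \<in> carrier G"
  by (induction w) (simp_all add: eval_word_Cons_letter letter_closed)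

lemma ping_pong_eval_word:
  assumes x: "x \<in> carrier G" and y: "y \<in> carrier G"
    and disj: "disjoint_family P"
    and play: "\<And>l e u. u \<in> carrier G - P (l, \<not> e) \<Longrightarrow> letter G x y (l, e) \<otimes> u \<in> P (l, e)"
  shows "w \<noteq> [] \<Longrightarrow> reduced_word w \<Longrightarrow> u \<in> carrier G - P (fst (last w), \<not> snd (last w))
           \<Longrightarrow> eval_word G x y w \<otimes> u \<in> P (hd w)"
proof (induction w arbitrary: u rule: reduced_word.induct)
  case (2 k)
  then show ?case
    using play[of u "fst k" "snd k"] letter_closed[OF x y] by (simp add: eval_word_Cons_letter)
next
  case (3 l e l' e' w)
  let ?v = "eval_word G x y ((l', e') # w) \<otimes> u"
  have "?v \<in> P (l', e')" using 3 by simp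
  moreover have "P (l', e') \<inter> P (l, \<not> e) = {}"
    using "3.prems"(2) by (intro disjoint_family_onD[OF disj]) auto
  ultimately have "?v \<notin> P (l, \<not> e)" by blast
  moreover have "?v \<in> carrier G" using "3.prems"(3) m_closed[OF eval_word_closed[OF x y]] by blast
  ultimately have "letter G x y (l, e) \<otimes> ?v \<in> P (l, e)" using play by simp
  then show ?case
    using "3.prems"(3) x y
    by (simp add: eval_word_Cons_letter m_assoc letter_closed eval_word_closed)
qed simp

lemma ping_pong:
  assumes x: "x \<in> carrier G" and y: "y \<in> carrier G"
    and disj: "disjoint_family P" and nonempty: "\<And>k. P k \<noteq> {}" and sub: "\<And>k. P k \<subseteq> carrier G"
    and play: "\<And>l e u. u \<in> carrier G - P (l, \<not> e) \<Longrightarrow> letter G x y (l, e) \<otimes> u \<in> P (l, e)"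
  shows "has_free_subgroup_rank2 G"
proof -
  have "eval_word G x y w \<noteq> \<one>" if w: "w \<noteq> [] \<and> reduced_word w" for w
  proof
    assume one: "eval_word G x y w = \<one>"
    \<comment> \<open>a territory distinct from the first letter's and from the last letter's inverse\<close>
    define k where "k = (\<not> fst (hd w), snd (last w))"
    obtain u where u: "u \<in> P k" using nonempty by blast
    have "k \<noteq> hd w" "k \<noteq> (fst (last w), \<not> snd (last w))" unfolding k_def by (auto simp: prod_eq_iff)
    then have "u \<notin> P (hd w)" "u \<notin> P (fst (last w), \<not> snd (last w))"
      using u disjoint_family_onD[OF disj UNIV_I UNIV_I] by blast+
    moreover have "u \<in> carrier G" using u sub by blast
    ultimately show False
      using ping_pong_eval_word[OF x y disj play, of w u] w one by simp
  qed
  then show ?thesis unfolding has_free_subgroup_rank2_def using x y by blast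
qed

lemma translate_into_other_piece:
  assumes c: "c \<in> carrier G" "c' \<in> carrier G" and UV: "U \<subseteq> carrier G" "V \<subseteq> carrier G"
    and cover: "(\<otimes>) c ` U \<union> (\<otimes>) c' ` V = carrier G"
  shows "u \<in> carrier G - V \<Longrightarrow> inv c \<otimes> c' \<otimes> u \<in> U"
    and "u \<in> carrier G - U \<Longrightarrow> inv c' \<otimes> c \<otimes> u \<in> V"
proof -
  have into: "inv d \<otimes> d' \<otimes> u \<in> X"
    if d: "d \<in> carrier G" "d' \<in> carrier G" and XY: "X \<subseteq> carrier G" "Y \<subseteq> carrier G"
      and cover: "(\<otimes>) d ` X \<union> (\<otimes>) d' ` Y = carrier G" and u: "u \<in> carrier G - Y"
    for d d' X Y u
  proof -
    have "d' \<otimes> u \<notin> (\<otimes>) d' ` Y" using u d XY by (auto simp: subset_iff)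
    then obtain z where "z \<in> X" "d' \<otimes> u = d \<otimes> z" using cover d u by blast
    moreover have "inv d \<otimes> (d \<otimes> z) = z"
      using \<open>z \<in> X\<close> XY d by (simp add: m_assoc[symmetric] subset_iff)
    ultimately show ?thesis using d u by (simp add: m_assoc)
  qed
  show "u \<in> carrier G - V \<Longrightarrow> inv c \<otimes> c' \<otimes> u \<in> U" using into[OF c UV cover] .
  show "u \<in> carrier G - U \<Longrightarrow> inv c' \<otimes> c \<otimes> u \<in> V"
    using into[OF c(2,1) UV(2,1)] cover by (simp add: Un_commute)
qed

theorem free_subgroup_if_complete_paradoxical_2_2:
  assumes "complete_paradoxical G 2 2"
  shows "has_free_subgroup_rank2 G"
proof -
  obtain A B a b where dec: "paradoxical_decomposition G {1..2::nat} {1..2::nat} A B a b"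
    using assms unfolding complete_paradoxical_iff by blast
  have two: "{1..2::nat} = {1, 2}" by auto
  have pieces: "A 1 \<subseteq> carrier G" "A 2 \<subseteq> carrier G" "B 1 \<subseteq> carrier G" "B 2 \<subseteq> carrier G"
    and shifts: "a 1 \<in> carrier G" "a 2 \<in> carrier G" "b 1 \<in> carrier G" "b 2 \<in> carrier G"
    and coverA: "(\<otimes>) (a 1) ` A 1 \<union> (\<otimes>) (a 2) ` A 2 = carrier G"
    and coverB: "(\<otimes>) (b 1) ` B 1 \<union> (\<otimes>) (b 2) ` B 2 = carrier G"
    using dec unfolding paradoxical_decomposition_def translates_partition_def two by auto
  have nonempty: "A 1 \<noteq> {}" "A 2 \<noteq> {}" "B 1 \<noteq> {}" "B 2 \<noteq> {}"
    using paradoxical_decomposition_other_piece[OF dec, of 1]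
      paradoxical_decomposition_other_piece[OF dec, of 2]
      paradoxical_decomposition_other_piece[OF paradoxical_decomposition_swap[OF dec], of 1]
      paradoxical_decomposition_other_piece[OF paradoxical_decomposition_swap[OF dec], of 2]
    unfolding two by auto
  define P where "P k = (if fst k then B else A) (if snd k then 2 else 1)" for k :: "bool \<times> bool"
  have disj: "disjoint_family P"
    using dec unfolding disjoint_family_on_def paradoxical_decomposition_def P_def two
    by (auto split: if_splits)
  have territories: "\<And>k. P k \<noteq> {}" "\<And>k. P k \<subseteq> carrier G"
    unfolding P_def using nonempty pieces by auto
  have play: "letter G (inv (a 1) \<otimes> a 2) (inv (b 1) \<otimes> b 2) (l, e) \<otimes> u \<in> P (l, e)"
    if "u \<in> carrier G - P (l, \<not> e)" for l e u
    using that translate_into_other_piece[OF shifts(1,2) pieces(1,2) coverA]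
      translate_into_other_piece[OF shifts(3,4) pieces(3,4) coverB]
    by (cases l; cases e)
      (simp_all add: P_def letter_def inv_mult_group shifts shifts[unfolded One_nat_def])
  have "inv (a 1) \<otimes> a 2 \<in> carrier G" "inv (b 1) \<otimes> b 2 \<in> carrier G"
    using shifts by simp_all
  from ping_pong[OF this disj territories play] show ?thesis .
qed

theorem tarski_number_eq_5:
  assumes "\<not> has_free_subgroup_rank2 G" and "complete_paradoxical G 3 2"
  shows "tarski_number G = 5"
proof -
  have "5 \<le> r + s" if "complete_paradoxical G r s" for r s
  proof (rule ccontr)
    assume "\<not> 5 \<le> r + s"
    then have "r = 2" "s = 2" using complete_paradoxical_ge_2[OF that] by auto
    then show False using free_subgroup_if_complete_paradoxical_2_2 that assms(1) by simp
  qed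
  moreover have "enat 5 \<in> {enat (r + s) |r s. complete_paradoxical G r s}"
    using assms(2) by force
  ultimately show ?thesis
    unfolding tarski_number_def
    by (intro antisym Inf_lower Inf_greatest) (auto simp: numeral_eq_enat)
qed

end

lemma disjoint_family_on_reindex:
  fixes k r :: nat
  assumes "disjoint_family_on P I" "inj_on f {1..k}" "f ` {1..k} \<subseteq> I"
  shows "disjoint_family_on (\<lambda>n. if n \<le> k then P (f n) else {}) {1..r}"
proof (unfold disjoint_family_on_def, intro ballI impI)
  fix m n assume mn: "m \<in> {1..r}" "n \<in> {1..r}" "m \<noteq> n"
  show "(if m \<le> k then P (f m) else {}) \<inter> (if n \<le> k then P (f n) else {}) = {}"
  proof (cases "m \<le> k \<and> n \<le> k")
    case True
    then have "f m \<noteq> f n" "f m \<in> I" "f n \<in> I" using mn assms(2,3) by (auto dest: inj_onD)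
    then show ?thesis using True disjoint_family_onD[OF assms(1)] by simp
  qed auto
qed

lemma UN_reindex:
  fixes k r :: nat
  assumes "f ` {1..k} = I" "k \<le> r"
  shows "(\<Union>n\<in>{1..r}. if n \<le> k then P (f n) else {}) = (\<Union>i\<in>I. P i)"
proof -
  have "(\<Union>n\<in>{1..r}. if n \<le> k then P (f n) else {}) = (\<Union>n\<in>{1..k}. P (f n))"
  proof (intro equalityI subsetI)
    fix x assume "x \<in> (\<Union>n\<in>{1..r}. if n \<le> k then P (f n) else {})"
    then obtain n where "n \<in> {1..r}" "n \<le> k" "x \<in> P (f n)" by (auto split: if_splits)
    then show "x \<in> (\<Union>n\<in>{1..k}. P (f n))" by auto
  next
    fix x assume "x \<in> (\<Union>n\<in>{1..k}. P (f n))"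
    then obtain n where "n \<in> {1..k}" "x \<in> P (f n)" by blast
    then show "x \<in> (\<Union>n\<in>{1..r}. if n \<le> k then P (f n) else {})"
      using assms(2) by (intro UN_I[of n]) auto
  qed
  then show ?thesis using assms(1) by auto
qed

lemma (in group) translates_partition_reindex:
  fixes k r :: nat
  assumes tp: "translates_partition G I P t" and f: "bij_betw f {1..k} I" and k: "k \<le> r"
  shows "translates_partition G {1..r} (\<lambda>n. if n \<le> k then P (f n) else {})
           (\<lambda>n. if n \<le> k then t (f n) else \<one>)"
proof -
  have inj: "inj_on f {1..k}" and onto: "f ` {1..k} = I" using f by (auto simp: bij_betw_def)
  have images: "(\<lambda>n. (\<otimes>) (if n \<le> k then t (f n) else \<one>) ` (if n \<le> k then P (f n) else {}))
          = (\<lambda>n. if n \<le> k then (\<otimes>) (t (f n)) ` P (f n) else {})"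
    by (intro ext) simp
  have disj: "disjoint_family_on (\<lambda>i. (\<otimes>) (t i) ` P i) I"
    and cover: "(\<Union>i\<in>I. (\<otimes>) (t i) ` P i) = carrier G"
    and shifts: "\<forall>i\<in>I. t i \<in> carrier G"
    using tp unfolding translates_partition_def by simp_all
  show ?thesis
    unfolding translates_partition_def images
  proof (intro conjI)
    show "\<forall>n\<in>{1..r}. (if n \<le> k then t (f n) else \<one>) \<in> carrier G" using shifts onto by auto
    show "disjoint_family_on (\<lambda>n. if n \<le> k then (\<otimes>) (t (f n)) ` P (f n) else {}) {1..r}"
      by (rule disjoint_family_on_reindex[OF disj inj equalityD1[OF onto]])
    show "(\<Union>n\<in>{1..r}. if n \<le> k then (\<otimes>) (t (f n)) ` P (f n) else {}) = carrier G"
      using UN_reindex[OF onto k, of "\<lambda>i. (\<otimes>) (t i) ` P i"] cover by simp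
  qed
qed

lemma (in group) complete_paradoxical_if_finite_decomposition:
  assumes dec: "paradoxical_decomposition G I J A B a b"
    and I: "finite I" "card I \<le> r" and J: "finite J" "card J \<le> s"
  shows "complete_paradoxical G r s"
proof -
  obtain f g where f: "bij_betw f {1..card I} I" and g: "bij_betw g {1..card J} J"
    using ex_bij_betw_nat_finite_1 I(1) J(1) by metis
  then have inj: "inj_on f {1..card I}" "inj_on g {1..card J}"
    and onto: "f ` {1..card I} = I" "g ` {1..card J} = J"
    by (simp_all add: bij_betw_def)
  have "paradoxical_decomposition G {1..r} {1..s}
          (\<lambda>n. if n \<le> card I then A (f n) else {}) (\<lambda>n. if n \<le> card J then B (g n) else {})
          (\<lambda>n. if n \<le> card I then a (f n) else \<one>) (\<lambda>n. if n \<le> card J then b (g n) else \<one>)"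
    using dec translates_partition_reindex[OF _ f I(2)] translates_partition_reindex[OF _ g J(2)]
      disjoint_family_on_reindex[OF _ inj(1) equalityD1[OF onto(1)], of A r]
      disjoint_family_on_reindex[OF _ inj(2) equalityD1[OF onto(2)], of B s]
      UN_reindex[OF onto(1) I(2), of A] UN_reindex[OF onto(2) J(2), of B]
    unfolding paradoxical_decomposition_def by simp
  then show ?thesis unfolding complete_paradoxical_iff by blast
qed

section \<open>Ordered subsystems\<close>

lemma sum_shift_truncated:
  fixes g :: "nat \<Rightarrow> int"
  assumes "1 \<le> p"
  shows "(\<Sum>i\<in>{1..p}. if i < p then g (Suc i) else 0) = (\<Sum>i\<in>{1..p}. g i) - g 1"
proof -
  have "(\<Sum>i\<in>{1..p}. if i < p then g (Suc i) else 0) = (\<Sum>i\<in>{1..<p}. g (Suc i))"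
    by (rule sum.mono_neutral_cong_right) auto
  also have "\<dots> = (\<Sum>i\<in>{Suc 1..<Suc p}. g i)"
    by (rule sum.shift_bounds_Suc_ivl[symmetric])
  also have "\<dots> = (\<Sum>i\<in>{Suc 1..p}. g i)"
    by (simp only: atLeastLessThanSuc_atLeastAtMost)
  also have "\<dots> = (\<Sum>i\<in>{1..p}. g i) - g 1"
    using assms by (simp add: sum.atLeast_Suc_atMost)
  finally show ?thesis .
qed

lemma disjoint_cover_if_sum_eq_1:
  fixes e :: "'i \<Rightarrow> 'a \<Rightarrow> int"
  assumes I: "finite I" and e01: "\<And>i x. i \<in> I \<Longrightarrow> x \<in> S \<Longrightarrow> e i x \<in> {0, 1}"
    and sum1: "\<And>x. x \<in> S \<Longrightarrow> (\<Sum>i\<in>I. e i x) = 1"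
  shows "disjoint_family_on (\<lambda>i. {x \<in> S. e i x = 1}) I" and "(\<Union>i\<in>I. {x \<in> S. e i x = 1}) = S"
proof -
  have nonneg: "0 \<le> e i x" if "i \<in> I" "x \<in> S" for i x using e01[OF that] by auto
  show "disjoint_family_on (\<lambda>i. {x \<in> S. e i x = 1}) I"
    unfolding disjoint_family_on_def
  proof (intro ballI impI, rule ccontr)
    fix i j assume ij: "i \<in> I" "j \<in> I" "i \<noteq> j"
      and "{x \<in> S. e i x = 1} \<inter> {x \<in> S. e j x = 1} \<noteq> {}"
    then obtain x where x: "x \<in> S" "e i x = 1" "e j x = 1" by blast
    have "(\<Sum>k\<in>{i, j}. e k x) \<le> (\<Sum>k\<in>I. e k x)"
      using ij x(1) nonneg by (intro sum_mono2 I) auto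
    then show False using ij x sum1[OF x(1)] by simp
  qed
  show "(\<Union>i\<in>I. {x \<in> S. e i x = 1}) = S"
  proof (intro equalityI subsetI)
    fix x assume x: "x \<in> S"
    have "\<exists>i\<in>I. e i x \<noteq> 0"
      using sum1[OF x] by (metis sum.neutral zero_neq_one)
    then show "x \<in> (\<Union>i\<in>I. {x \<in> S. e i x = 1})" using e01 x by fastforce
  qed auto
qed

lemma card_saturated_family_le:
  assumes disj: "disjoint_family_on Q I" and nonempty: "\<And>i. i \<in> I \<Longrightarrow> Q i \<noteq> {}"
    and sub: "\<And>i. i \<in> I \<Longrightarrow> Q i \<subseteq> S"
    and saturated: "\<And>i x y. i \<in> I \<Longrightarrow> x \<in> Q i \<Longrightarrow> y \<in> S \<Longrightarrow> f y = f x \<Longrightarrow> y \<in> Q i"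
    and fin: "finite (f ` S)"
  shows "finite I" and "card I \<le> card (f ` S)"
proof -
  define rep where "rep i = f (SOME x. x \<in> Q i)" for i
  have rep: "(SOME x. x \<in> Q i) \<in> Q i" if "i \<in> I" for i
    using nonempty[OF that] by (simp add: some_in_eq)
  have "inj_on rep I"
  proof (rule inj_onI)
    fix i j assume ij: "i \<in> I" "j \<in> I" "rep i = rep j"
    then have "(SOME x. x \<in> Q i) \<in> Q j"
      using saturated[OF ij(2) rep[OF ij(2)]] rep[OF ij(1)] sub[OF ij(1)] unfolding rep_def by blast
    then show "i = j" using rep[OF ij(1)] disjoint_family_onD[OF disj ij(1,2)] by blast
  qed
  moreover have "rep ` I \<subseteq> f ` S" using rep sub unfolding rep_def by blast
  ultimately show "finite I" "card I \<le> card (f ` S)"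
    using fin by (auto intro: card_inj_on_le inj_on_finite)
qed

text \<open>Row \<open>i\<close> here is row \<open>\<pi> i\<close> of the subsystem, read at the configuration \<open>cfg x\<close>;
  \<open>h i\<close> is a translation realising equation \<open>\<pi> i\<close>.\<close>
locale ordered_subsystem = group G for G :: "('a, 'b) monoid_scheme" (structure) +
  fixes cfg :: "'a \<Rightarrow> 'c" and p :: nat and A B :: "nat \<Rightarrow> 'c \<Rightarrow> int" and h :: "nat \<Rightarrow> 'a"
  assumes A_01: "i \<in> {1..p} \<Longrightarrow> x \<in> carrier G \<Longrightarrow> A i (cfg x) \<in> {0, 1}"
    and B_01: "i \<in> {1..p} \<Longrightarrow> x \<in> carrier G \<Longrightarrow> B i (cfg x) \<in> {0, 1}"
    and h_closed: "i \<in> {1..p} \<Longrightarrow> h i \<in> carrier G"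
    and A_eq_B_translate: "i \<in> {1..p} \<Longrightarrow> x \<in> carrier G \<Longrightarrow> A i (cfg x) = B i (cfg (h i \<otimes> x))"
    and sum_B_minus_A: "x \<in> carrier G \<Longrightarrow> (\<Sum>i\<in>{1..p}. B i (cfg x) - A i (cfg x)) = 1"
    and A_Suc_le_B: "1 \<le> i \<Longrightarrow> i < p \<Longrightarrow> x \<in> carrier G \<Longrightarrow> A (Suc i) (cfg x) \<le> B i (cfg x)"
begin

lemma p_pos: "1 \<le> p"
  using sum_B_minus_A[OF one_closed] by (cases p) auto

text \<open>Row \<open>i\<close> of \<open>PB - P\<^sup>+A\<close>, except that the last row omits its term \<open>A 1\<close>.\<close>
definition d :: "nat \<Rightarrow> 'a \<Rightarrow> int" where
  "d i x = B i (cfg x) - (if i < p then A (Suc i) (cfg x) else 0)"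

definition D :: "nat \<Rightarrow> 'a set" where
  "D i = {x \<in> carrier G. d i x = 1}"

definition X :: "'a set" where
  "X = {x \<in> carrier G. A 1 (cfg x) = 1}"

primrec w :: "nat \<Rightarrow> 'a" where
  "w 0 = \<one>"
| "w (Suc i) = h (Suc i) \<otimes> w i"

definition run :: "'a \<Rightarrow> nat \<Rightarrow> bool" where
  "run x i \<longleftrightarrow> (\<forall>j\<in>{1..i}. A j (cfg (w (j - 1) \<otimes> x)) = 1)"

definition Z :: "nat \<Rightarrow> 'a set" where
  "Z i = {x \<in> carrier G. w i \<otimes> x \<in> D i}"

lemma w_closed: "i \<le> p \<Longrightarrow> w i \<in> carrier G"
  by (induction i) (simp_all add: h_closed)

lemma d_01: "i \<in> {1..p} \<Longrightarrow> x \<in> carrier G \<Longrightarrow> d i x \<in> {0, 1}"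
  using A_01[of "Suc i" x] B_01[of i x] A_Suc_le_B[of i x] by (auto simp: d_def)

lemma sum_d: "x \<in> carrier G \<Longrightarrow> (\<Sum>i\<in>{1..p}. d i x) = 1 + A 1 (cfg x)"
  using sum_shift_truncated[OF p_pos, of "\<lambda>i. A i (cfg x)"] sum_B_minus_A[of x]
  by (simp add: d_def sum_subtractf)

lemma run_Suc: "run x (Suc i) \<longleftrightarrow> run x i \<and> A (Suc i) (cfg (w i \<otimes> x)) = 1"
  by (auto simp: run_def atLeastAtMostSuc_conv)

lemma run_mono: "run x i \<Longrightarrow> j \<le> i \<Longrightarrow> run x j"
  by (simp add: run_def)

lemma run_1: "x \<in> carrier G \<Longrightarrow> run x 1 \<longleftrightarrow> A 1 (cfg x) = 1"
  by (simp add: run_def)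

text \<open>Along \<open>w i \<otimes> x\<close>, the entry of \<open>B i\<close> is the entry of \<open>A i\<close> one step earlier, and by
  \<open>A_Suc_le_B\<close> an entry 1 of \<open>A (Suc i)\<close> forces an entry 1 of \<open>B i\<close>.\<close>
lemma B_translate_iff_run:
  "i \<in> {1..p} \<Longrightarrow> x \<in> carrier G \<Longrightarrow> B i (cfg (w i \<otimes> x)) = 1 \<longleftrightarrow> run x i"
proof (induction i)
  case (Suc i)
  have wx: "w i \<otimes> x \<in> carrier G" using Suc.prems w_closed by simp
  have "w (Suc i) \<otimes> x = h (Suc i) \<otimes> (w i \<otimes> x)"
    using Suc.prems h_closed w_closed by (simp add: m_assoc)
  then have "B (Suc i) (cfg (w (Suc i) \<otimes> x)) = A (Suc i) (cfg (w i \<otimes> x))"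
    using Suc.prems A_eq_B_translate wx by simp
  moreover have "run x i" if A1: "A (Suc i) (cfg (w i \<otimes> x)) = 1"
  proof (cases "i = 0")
    case False
    then have i: "i \<in> {1..p}" "1 \<le> i" "i < p" using Suc.prems by auto
    have "B i (cfg (w i \<otimes> x)) = 1"
      using A1 A_Suc_le_B[OF i(2,3) wx] B_01[OF i(1) wx] by auto
    then show ?thesis using Suc.IH i(1) Suc.prems(2) by simp
  qed (simp add: run_def)
  ultimately show ?case by (auto simp: run_Suc)
qed simp

lemma mem_Z_iff:
  assumes i: "i \<in> {1..p}" and x: "x \<in> carrier G"
  shows "x \<in> Z i \<longleftrightarrow> run x i \<and> \<not> (i < p \<and> run x (Suc i))"
proof -
  define y where "y = w i \<otimes> x"
  have y: "y \<in> carrier G" using i x w_closed by (simp add: y_def)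
  have "d i y = 1 \<longleftrightarrow> B i (cfg y) = 1 \<and> \<not> (i < p \<and> A (Suc i) (cfg y) = 1)"
    using i A_01[of "Suc i" y] B_01[of i y] A_Suc_le_B[of i y] y
    by (cases "i < p") (auto simp: d_def)
  then show ?thesis
    using i x y B_translate_iff_run run_Suc by (auto simp: Z_def D_def y_def)
qed

lemma Z_subset_X: "i \<in> {1..p} \<Longrightarrow> Z i \<subseteq> X"
  using mem_Z_iff run_mono[of _ i 1] run_1 by (auto simp: X_def Z_def)

lemma disjoint_Z: "disjoint_family_on Z {1..p}"
proof -
  have "Z i \<inter> Z j = {}" if "i \<in> {1..p}" "j \<in> {1..p}" "i < j" for i j
    using that mem_Z_iff run_mono[of _ j "Suc i"] by (auto simp: Z_def)
  then show ?thesis unfolding disjoint_family_on_def by (metis Int_commute linorder_neqE_nat)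
qed

lemma UN_Z_eq_X: "(\<Union>i\<in>{1..p}. Z i) = X"
proof (intro equalityI subsetI)
  fix x assume x: "x \<in> X"
  define R where "R = {i \<in> {1..p}. run x i}"
  have R: "i \<in> R \<longleftrightarrow> i \<in> {1..p} \<and> run x i" for i by (simp add: R_def)
  have fin: "finite R" by (simp add: R_def)
  have "1 \<in> R" using x p_pos run_1 R by (simp add: X_def)
  then have "Max R \<in> R" using Max_in[OF fin] by blast
  then have max: "Max R \<in> {1..p}" "run x (Max R)" using R by simp_all
  have "Suc (Max R) \<notin> R" using Max_ge[OF fin, of "Suc (Max R)"] by auto
  then have "\<not> (Max R < p \<and> run x (Suc (Max R)))" using R max(1) by auto
  then have "x \<in> Z (Max R)" using x max mem_Z_iff by (simp add: X_def)
  then show "x \<in> (\<Union>i\<in>{1..p}. Z i)" using max(1) by blast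
qed (use Z_subset_X in blast)

end

locale ordered_subsystem_3 = ordered_subsystem +
  assumes finite_configurations: "finite (cfg ` carrier G)"
    and card_configurations: "card (cfg ` carrier G) \<le> 3"
    and card_A1: "card {c \<in> cfg ` carrier G. A 1 c = 1} = 1"
begin

lemma X_fibre: obtains x0 where "x0 \<in> carrier G" "X = {x \<in> carrier G. cfg x = cfg x0}"
proof -
  obtain c where c: "{c' \<in> cfg ` carrier G. A 1 c' = 1} = {c}"
    using card_A1 card_1_singletonE by blast
  then have "c \<in> cfg ` carrier G" by blast
  then obtain x0 where x0: "x0 \<in> carrier G" "cfg x0 = c" by blast
  have "X = {x \<in> carrier G. cfg x = cfg x0}" using c x0 by (auto simp: X_def)
  with x0 show thesis using that by blast
qed

definition X_row :: nat where
  "X_row = (SOME i. i \<in> {1..p} \<and> X \<subseteq> D i)"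

text \<open>On \<open>X\<close> the rows \<open>d i\<close> sum to 2, so some \<open>D i\<close> meets \<open>X\<close>; as \<open>X\<close> is a single
  fibre of \<open>cfg\<close>, that \<open>D i\<close> contains all of \<open>X\<close>.\<close>
lemma X_row_spec: "X_row \<in> {1..p}" "X \<subseteq> D X_row"
proof -
  obtain x0 where x0: "x0 \<in> carrier G" and X: "X = {x \<in> carrier G. cfg x = cfg x0}"
    using X_fibre by blast
  have "A 1 (cfg x0) = 1" using X x0 by (auto simp: X_def)
  then have "(\<Sum>i\<in>{1..p}. d i x0) \<noteq> 0" using sum_d[OF x0] by simp
  then obtain i where i: "i \<in> {1..p}" "d i x0 \<noteq> 0" by (meson sum.neutral)
  then have "x0 \<in> D i" using d_01[OF i(1) x0] x0 by (simp add: D_def)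
  then have "X \<subseteq> D i" using X by (auto simp: D_def d_def)
  then have "\<exists>i. i \<in> {1..p} \<and> X \<subseteq> D i" using i(1) by blast
  from someI_ex[OF this] show "X_row \<in> {1..p}" "X \<subseteq> D X_row"
    unfolding X_row_def by simp_all
qed

definition K :: "'a set" where
  "K = D X_row - X"

definition target_ind :: "nat \<Rightarrow> 'a \<Rightarrow> int" where
  "target_ind i x = (if i = 0 then (if x \<in> K then 1 else 0) else d i x)"

definition target :: "nat \<Rightarrow> 'a set" where
  "target i = {x \<in> carrier G. target_ind i x = 1}"

lemma target_0: "target 0 = K"
  by (auto simp: target_def target_ind_def K_def D_def)

lemma target_pos: "i \<noteq> 0 \<Longrightarrow> target i = D i"
  by (simp add: target_def target_ind_def D_def)

lemma sum_target_ind: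
  assumes x: "x \<in> carrier G"
  shows "(\<Sum>i\<in>{0..p} - {X_row}. target_ind i x) = 1"
proof -
  have split: "{0..p} - {X_row} = insert 0 ({1..p} - {X_row})" using X_row_spec(1) by auto
  have "(\<Sum>i\<in>{1..p}. d i x) = d X_row x + (\<Sum>i\<in>{1..p} - {X_row}. d i x)"
    using X_row_spec(1) by (simp add: sum.remove)
  then have sum_eq: "(\<Sum>i\<in>{0..p} - {X_row}. target_ind i x)
      = (if x \<in> K then 1 else 0) + 1 + A 1 (cfg x) - d X_row x"
    unfolding split using sum_d[OF x] by (simp add: target_ind_def)
  show ?thesis
  proof (cases "x \<in> X")
    case True
    then have "x \<notin> K" "A 1 (cfg x) = 1" "d X_row x = 1"
      using X_row_spec(2) by (auto simp: K_def X_def D_def)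
    then show ?thesis using sum_eq by simp
  next
    case False
    then have "A 1 (cfg x) = 0" using A_01[of 1 x] x p_pos by (auto simp: X_def)
    moreover have "d X_row x = (if x \<in> K then 1 else 0)"
      using False d_01[OF X_row_spec(1) x] x by (auto simp: K_def D_def)
    ultimately show ?thesis using sum_eq by simp
  qed
qed

lemma target_ind_01: "i \<in> {0..p} \<Longrightarrow> x \<in> carrier G \<Longrightarrow> target_ind i x \<in> {0, 1}"
  using d_01[of i x] by (auto simp: target_ind_def)

lemma target_ind_cfg:
  "x \<in> carrier G \<Longrightarrow> y \<in> carrier G \<Longrightarrow> cfg x = cfg y \<Longrightarrow> target_ind i x = target_ind i y"
  by (simp add: target_ind_def K_def D_def X_def d_def)

lemma targets_partition:
  "disjoint_family_on target ({0..p} - {X_row})" "(\<Union>i\<in>{0..p} - {X_row}. target i) = carrier G"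
proof -
  have "finite ({0..p} - {X_row})" by simp
  note partition = disjoint_cover_if_sum_eq_1[OF this, of "carrier G" target_ind]
  show "disjoint_family_on target ({0..p} - {X_row})"
    using partition(1)[OF target_ind_01 sum_target_ind] unfolding target_def by simp
  show "(\<Union>i\<in>{0..p} - {X_row}. target i) = carrier G"
    using partition(2)[OF target_ind_01 sum_target_ind] unfolding target_def by simp
qed

definition left_index :: "nat set" where
  "left_index = {i \<in> {0..p} - {X_row}. target i \<noteq> {}}"

lemma card_left_index: "finite left_index" "card left_index \<le> 3"
proof -
  have disj: "disjoint_family_on target left_index"
    by (rule disjoint_family_on_mono[OF _ targets_partition(1)]) (auto simp: left_index_def)
  have nonempty: "\<And>i. i \<in> left_index \<Longrightarrow> target i \<noteq> {}"
    and sub: "\<And>i. i \<in> left_index \<Longrightarrow> target i \<subseteq> carrier G"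
    by (auto simp: left_index_def target_def)
  have saturated: "y \<in> target i"
    if "i \<in> left_index" "x \<in> target i" "y \<in> carrier G" "cfg y = cfg x" for i x y
    using that target_ind_cfg[of y x i] by (simp add: target_def)
  show "finite left_index"
    using disj nonempty sub saturated finite_configurations by (rule card_saturated_family_le(1))
  have "card left_index \<le> card (cfg ` carrier G)"
    using disj nonempty sub saturated finite_configurations by (rule card_saturated_family_le(2))
  then show "card left_index \<le> 3" using card_configurations by simp
qed

definition left_piece :: "nat \<Rightarrow> 'a set" where
  "left_piece i = {x \<in> carrier G. w i \<otimes> x \<in> target i}"

definition right_target :: "bool \<Rightarrow> 'a set" where
  "right_target b = (if b then D X_row else carrier G - D X_row)"

definition right_shift :: "bool \<Rightarrow> 'a" where
  "right_shift b = (if b then w X_row else \<one>)"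

definition right_piece :: "bool \<Rightarrow> 'a set" where
  "right_piece b = {x \<in> carrier G. right_shift b \<otimes> x \<in> right_target b}"

lemma K_subset: "K \<subseteq> D X_row" "K \<subseteq> carrier G"
  by (auto simp: K_def D_def)

lemma K_disjoint_X: "K \<inter> X = {}"
  by (auto simp: K_def)

lemma left_piece_cases:
  assumes "i \<in> left_index"
  shows "i = 0 \<and> left_piece i = K \<or> i \<in> {1..p} - {X_row} \<and> left_piece i = Z i"
proof (cases "i = 0")
  case True
  then show ?thesis using K_subset(2) by (auto simp: left_piece_def target_0)
next
  case False
  then show ?thesis using assms by (auto simp: left_piece_def target_pos Z_def left_index_def)
qed

lemma right_piece_True: "right_piece True = Z X_row"
  by (simp add: right_piece_def right_target_def right_shift_def Z_def)

lemma right_piece_False: "right_piece False = carrier G - D X_row"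
  by (auto simp: right_piece_def right_target_def right_shift_def)

lemma left_translates: "translates_partition G left_index left_piece w"
proof -
  have index: "i \<in> left_index \<Longrightarrow> i \<in> {0..p} - {X_row}" for i by (simp add: left_index_def)
  have images: "(\<lambda>i. (\<otimes>) (w i) ` left_piece i) i = target i" if "i \<in> left_index" for i
    unfolding left_piece_def using index[OF that]
    by (intro translate_preimage[OF w_closed]) (auto simp: target_def)
  have "(\<Union>i\<in>left_index. target i) = (\<Union>i\<in>{0..p} - {X_row}. target i)"
    unfolding left_index_def by blast
  then have "(\<Union>i\<in>left_index. target i) = carrier G" using targets_partition(2) by simp
  moreover have "disjoint_family_on target left_index"
    by (rule disjoint_family_on_mono[OF _ targets_partition(1)]) (use index in blast)
  ultimately show ?thesis
    using images index w_closed unfolding translates_partition_def disjoint_family_on_def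
    by (simp cong: SUP_cong)
qed

lemma right_translates: "translates_partition G UNIV right_piece right_shift"
proof -
  have shifts: "right_shift b \<in> carrier G" for b
    using w_closed X_row_spec(1) by (simp add: right_shift_def)
  have "(\<otimes>) (right_shift b) ` right_piece b = right_target b" for b
    unfolding right_piece_def
    by (rule translate_preimage[OF shifts]) (auto simp: right_target_def D_def)
  then show ?thesis
    using shifts unfolding translates_partition_def disjoint_family_on_def
    by (auto simp: right_target_def D_def UNIV_bool)
qed

lemma Z_X_row_subset: "Z X_row \<subseteq> X" "Z X_row \<subseteq> D X_row"
  using Z_subset_X[OF X_row_spec(1)] X_row_spec(2) by auto

lemma left_piece_subset:
  assumes "i \<in> left_index"
  shows "left_piece i \<subseteq> D X_row - Z X_row"
  using left_piece_cases[OF assms]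
proof (elim disjE conjE)
  assume "left_piece i = K"
  then show ?thesis using K_subset K_disjoint_X Z_X_row_subset by auto
next
  assume "i \<in> {1..p} - {X_row}" "left_piece i = Z i"
  then show ?thesis
    using Z_subset_X[of i] X_row_spec disjoint_family_onD[OF disjoint_Z, of i X_row] by auto
qed

lemma disjoint_left_piece: "disjoint_family_on left_piece left_index"
  unfolding disjoint_family_on_def
proof (intro ballI impI)
  fix i j assume ij: "i \<in> left_index" "j \<in> left_index" "i \<noteq> j"
  have K_Z: "K \<inter> Z k = {}" if "k \<in> {1..p}" for k using Z_subset_X[OF that] K_disjoint_X by blast
  show "left_piece i \<inter> left_piece j = {}"
    using left_piece_cases[OF ij(1)] left_piece_cases[OF ij(2)]
  proof (elim disjE conjE)
    assume "i \<in> {1..p} - {X_row}" "j \<in> {1..p} - {X_row}"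
    then show "left_piece i = Z i \<Longrightarrow> left_piece j = Z j \<Longrightarrow> left_piece i \<inter> left_piece j = {}"
      using disjoint_family_onD[OF disjoint_Z, of i j] ij(3) by simp
  qed (use ij(3) K_Z[of i] K_Z[of j] in auto)
qed

lemma UN_left_right_piece:
  "(\<Union>i\<in>left_index. left_piece i) \<union> (\<Union>b. right_piece b) = carrier G"
proof (intro equalityI subsetI)
  fix x assume x: "x \<in> carrier G"
  consider "x \<notin> D X_row" | "x \<in> K" | "x \<in> X" by (auto simp: K_def)
  then show "x \<in> (\<Union>i\<in>left_index. left_piece i) \<union> (\<Union>b. right_piece b)"
  proof cases
    case 1
    then show ?thesis using x right_piece_False by blast
  next
    case 2
    then have "target 0 \<noteq> {}" using target_0 by auto
    then have "0 \<in> left_index" using X_row_spec(1) by (simp add: left_index_def)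
    moreover have "left_piece 0 = K" using left_piece_cases[OF calculation] by auto
    ultimately show ?thesis using 2 by blast
  next
    case 3
    then obtain i where i: "i \<in> {1..p}" "x \<in> Z i" using UN_Z_eq_X by blast
    show ?thesis
    proof (cases "i = X_row")
      case False
      have "w i \<otimes> x \<in> target i" using i target_pos[of i] by (auto simp: Z_def)
      then have "i \<in> left_index" using i(1) False by (auto simp: left_index_def)
      moreover have "left_piece i = Z i" using left_piece_cases[OF calculation] i(1) by auto
      ultimately show ?thesis using i(2) by blast
    qed (use i right_piece_True in blast)
  qed
qed (auto simp: left_piece_def right_piece_def)

lemma paradoxical_decomposition_left_right:
  "paradoxical_decomposition G left_index UNIV left_piece right_piece w right_shift"
  unfolding paradoxical_decomposition_def
proof (intro conjI disjoint_left_piece left_translates right_translates UN_left_right_piece)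
  show "disjoint_family_on right_piece UNIV"
    using right_piece_True right_piece_False Z_X_row_subset
    by (auto simp: disjoint_family_on_def UNIV_bool)
  have "left_piece i \<inter> right_piece b = {}" if "i \<in> left_index" for i b
    using left_piece_subset[OF that] by (cases b) (auto simp: right_piece_True right_piece_False)
  then show "(\<Union>i\<in>left_index. left_piece i) \<inter> (\<Union>b. right_piece b) = {}" by blast
qed

theorem complete_paradoxical_3_2: "complete_paradoxical G 3 2"
  by (rule complete_paradoxical_if_finite_decomposition[OF paradoxical_decomposition_left_right
        card_left_index])
    (simp_all add: UNIV_bool)

end

section \<open>Configurations\<close>

definition part_index :: "(nat \<Rightarrow> 'a set) \<Rightarrow> nat \<Rightarrow> 'a \<Rightarrow> nat" where
  "part_index E m y = (THE i. i \<in> {1..m} \<and> y \<in> E i)"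

lemma part_index_eq:
  assumes "is_partition G E m" "i \<in> {1..m}" "y \<in> E i"
  shows "part_index E m y = i"
  unfolding part_index_def
  by (rule the_equality) (use assms in \<open>auto simp: is_partition_def disjoint_iff\<close>)

lemma part_index_mem:
  assumes "is_partition G E m" "y \<in> carrier G"
  shows "part_index E m y \<in> {1..m}" "y \<in> E (part_index E m y)"
proof -
  obtain i where "i \<in> {1..m}" "y \<in> E i" using assms unfolding is_partition_def by blast
  with part_index_eq[OF assms(1) this] show "part_index E m y \<in> {1..m}" "y \<in> E (part_index E m y)"
    by simp_all
qed

definition configuration ::
    "('a, 'b) monoid_scheme \<Rightarrow> 'a list \<Rightarrow> (nat \<Rightarrow> 'a set) \<Rightarrow> nat \<Rightarrow> 'a \<Rightarrow> nat list" where
  "configuration G g E m x = map (\<lambda>z. part_index E m (z \<otimes>\<^bsub>G\<^esub> x)) (\<one>\<^bsub>G\<^esub> # g)"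

context group
begin

lemma configuration_nth:
  "j \<le> length g \<Longrightarrow> configuration G g E m x ! j = part_index E m (((\<one> # g) ! j) \<otimes> x)"
  unfolding configuration_def by (subst nth_map) auto

lemma Con_iff:
  "C \<in> Con G g E m \<longleftrightarrow> length C = Suc (length g) \<and> (\<forall>j<length C. C ! j \<in> {1..m}) \<and>
     (\<exists>x\<in>carrier G. \<forall>j\<le>length g. ((\<one> # g) ! j) \<otimes> x \<in> E (C ! j))"
proof -
  have "(\<forall>j\<le>length g. ((\<one> # g) ! j) \<otimes> x \<in> E (C ! j)) \<longleftrightarrow>
      x \<in> E (C ! 0) \<and> (\<forall>i\<in>{1..length g}. g ! (i - 1) \<otimes> x \<in> E (C ! i))" if "x \<in> carrier G" for x
    using that by (auto simp: nth_Cons' le_Suc_eq)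
  then show ?thesis unfolding Con_def by auto
qed

lemma nth_Cons_one_closed: "set g \<subseteq> carrier G \<Longrightarrow> j \<le> length g \<Longrightarrow> (\<one> # g) ! j \<in> carrier G"
  using nth_mem[of j "\<one> # g"] by auto

lemma Con_eq_image_configuration:
  assumes g: "set g \<subseteq> carrier G" and part: "is_partition G E m"
  shows "Con G g E m = configuration G g E m ` carrier G"
proof (intro equalityI subsetI)
  fix C assume "C \<in> Con G g E m"
  then obtain x where x: "x \<in> carrier G" and len: "length C = Suc (length g)"
    and entries: "\<forall>j<length C. C ! j \<in> {1..m}"
    and pieces: "\<forall>j\<le>length g. ((\<one> # g) ! j) \<otimes> x \<in> E (C ! j)"
    unfolding Con_iff by blast
  have "configuration G g E m x = C"
  proof (rule nth_equalityI)
    fix j assume "j < length (configuration G g E m x)"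
    then have j: "j \<le> length g" by (simp add: configuration_def)
    then show "configuration G g E m x ! j = C ! j"
      using configuration_nth[OF j] part_index_eq[OF part] entries pieces len by simp
  qed (simp add: configuration_def len)
  then show "C \<in> configuration G g E m ` carrier G" using x by blast
next
  fix C assume "C \<in> configuration G g E m ` carrier G"
  then obtain x where x: "x \<in> carrier G" and C: "C = configuration G g E m x" by blast
  have shifted: "((\<one> # g) ! j) \<otimes> x \<in> carrier G" if "j \<le> length g" for j
    using nth_Cons_one_closed[OF g that] x by simp
  have len: "length C = Suc (length g)" by (simp add: C configuration_def)
  have "C ! j \<in> {1..m}" "((\<one> # g) ! j) \<otimes> x \<in> E (C ! j)" if "j \<le> length g" for j
    using part_index_mem[OF part shifted[OF that]] configuration_nth[OF that] by (simp_all add: C)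
  then show "C \<in> Con G g E m"
    unfolding Con_iff using x len by (auto simp: less_Suc_eq_le)
qed

lemma Eq_equation_translate:
  assumes g: "set g \<subseteq> carrier G" and part: "is_partition G E m"
    and eq: "is_Eq_equation G g E m a b"
  shows "\<exists>h\<in>carrier G. \<forall>x\<in>carrier G.
           a (configuration G g E m x) = b (configuration G g E m (h \<otimes> x))"
proof -
  obtain i j k where j: "j \<le> length g" and k: "k \<le> length g"
    and ab: "\<forall>C\<in>Con G g E m.
      a C = (if C ! j = i then 1 else 0) \<and> b C = (if C ! k = i then 1 else 0)"
    using eq unfolding is_Eq_equation_def by blast
  let ?g = "\<lambda>j. (\<one> # g) ! j"
  have gjk: "?g j \<in> carrier G" "?g k \<in> carrier G" using nth_Cons_one_closed[OF g] j k by auto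
  have "a (configuration G g E m x) = b (configuration G g E m ((inv (?g k) \<otimes> ?g j) \<otimes> x))"
    if x: "x \<in> carrier G" for x
  proof -
    have "?g k \<otimes> ((inv (?g k) \<otimes> ?g j) \<otimes> x) = ?g j \<otimes> x"
      using gjk x by (simp add: m_assoc[symmetric])
    then have "configuration G g E m ((inv (?g k) \<otimes> ?g j) \<otimes> x) ! k = configuration G g E m x ! j"
      using configuration_nth[OF j] configuration_nth[OF k] by simp
    moreover have "configuration G g E m y \<in> Con G g E m" if "y \<in> carrier G" for y
      using Con_eq_image_configuration[OF g part] that by blast
    ultimately show ?thesis using ab x gjk by simp
  qed
  then show ?thesis using gjk by blast
qed

end

lemma Eq_equation_01:
  assumes "is_Eq_equation G g E m a b" "C \<in> Con G g E m"
  shows "a C \<in> {0, 1}" "b C \<in> {0, 1}"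
proof -
  obtain i j k where "\<forall>C\<in>Con G g E m.
      a C = (if C ! j = i then 1 else 0) \<and> b C = (if C ! k = i then 1 else 0)"
    using assms(1) unfolding is_Eq_equation_def by blast
  then show "a C \<in> {0, 1}" "b C \<in> {0, 1}" using assms(2) by simp_all
qed

lemma (in group) ordered_subsystem_if_Eq_subsystem:
  fixes A B :: "nat \<Rightarrow> nat list \<Rightarrow> int"
  assumes g: "set g \<subseteq> carrier G" and part: "is_partition G E m"
    and subsys: "\<forall>t\<in>{1..p}. is_Eq_equation G g E m (A t) (B t)"
    and sum_one: "\<forall>C\<in>Con G g E m. (\<Sum>t\<in>{1..p}. B t C - A t C) = 1"
    and perm: "\<pi> permutes {1..p}"
    and nonneg: "\<forall>i\<in>{1..p-1}. \<forall>C\<in>Con G g E m. B (\<pi> i) C - A (\<pi> (i + 1)) C \<ge> 0"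
  obtains h where "ordered_subsystem G (configuration G g E m) p (\<lambda>i. A (\<pi> i)) (\<lambda>i. B (\<pi> i)) h"
proof -
  let ?cfg = "configuration G g E m"
  have cfg_Con: "x \<in> carrier G \<Longrightarrow> ?cfg x \<in> Con G g E m" for x
    using Con_eq_image_configuration[OF g part] by blast
  have "\<forall>t\<in>{1..p}. \<exists>h\<in>carrier G. \<forall>x\<in>carrier G. A t (?cfg x) = B t (?cfg (h \<otimes> x))"
    using Eq_equation_translate[OF g part] subsys by blast
  then obtain H where H: "\<And>t. t \<in> {1..p} \<Longrightarrow> H t \<in> carrier G"
    "\<And>t x. t \<in> {1..p} \<Longrightarrow> x \<in> carrier G \<Longrightarrow> A t (?cfg x) = B t (?cfg (H t \<otimes> x))"
    by metis
  have \<pi>: "\<pi> i \<in> {1..p}" if "i \<in> {1..p}" for i using permutes_in_image[OF perm] that by simp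
  have "ordered_subsystem G ?cfg p (\<lambda>i. A (\<pi> i)) (\<lambda>i. B (\<pi> i)) (\<lambda>i. H (\<pi> i))"
  proof (intro ordered_subsystem.intro[OF is_group] ordered_subsystem_axioms.intro)
    fix i x assume i: "i \<in> {1..p}" and x: "x \<in> carrier G"
    show "A (\<pi> i) (?cfg x) \<in> {0, 1}" "B (\<pi> i) (?cfg x) \<in> {0, 1}"
      using Eq_equation_01 subsys \<pi>[OF i] cfg_Con[OF x] by blast+
    show "A (\<pi> i) (?cfg x) = B (\<pi> i) (?cfg (H (\<pi> i) \<otimes> x))" using H(2) \<pi>[OF i] x .
  next
    fix x assume x: "x \<in> carrier G"
    show "(\<Sum>i\<in>{1..p}. B (\<pi> i) (?cfg x) - A (\<pi> i) (?cfg x)) = 1"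
      using sum.permute[OF perm, of "\<lambda>t. B t (?cfg x) - A t (?cfg x)"] sum_one cfg_Con[OF x]
      by (simp add: comp_def)
  next
    fix i x assume "1 \<le> i" "i < p" "x \<in> carrier G"
    then show "A (\<pi> (Suc i)) (?cfg x) \<le> B (\<pi> i) (?cfg x)" using nonneg cfg_Con by fastforce
  qed (use H(1) \<pi> in blast)
  then show thesis by (rule that)
qed

theorem mainTheorem6:
  fixes G :: "('a, 'b) monoid_scheme"
    and g :: "'a list" and E :: "nat \<Rightarrow> 'a set" and m :: nat
    and p :: nat and A B :: "nat \<Rightarrow> nat list \<Rightarrow> int" and \<pi> :: "nat \<Rightarrow> nat"
  assumes grp: "group G"
    and g_in: "set g \<subseteq> carrier G"
    and part: "is_partition G E m"
    and subsys: "\<forall>t\<in>{1..p}. is_Eq_equation G g E m (A t) (B t)"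
    and sum_one: "\<forall>C\<in>Con G g E m. (\<Sum>t\<in>{1..p}. B t C - A t C) = 1"
    and perm: "\<pi> permutes {1..p}"
    and nonneg: "\<forall>i\<in>{1..p-1}. \<forall>C\<in>Con G g E m. B (\<pi> i) C - A (\<pi> (i + 1)) C \<ge> 0"
    and ell: "card (Con G g E m) = 3"
    and one_entry: "card {C \<in> Con G g E m. A (\<pi> 1) C = 1} = 1"
    and nofree: "\<not> has_free_subgroup_rank2 G"
  shows "tarski_number G = 5"
proof -
  interpret group G by (fact grp)
  let ?cfg = "configuration G g E m"
  obtain h where "ordered_subsystem G ?cfg p (\<lambda>i. A (\<pi> i)) (\<lambda>i. B (\<pi> i)) h"
    using ordered_subsystem_if_Eq_subsystem[OF g_in part subsys sum_one perm nonneg] .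
  moreover have Con: "Con G g E m = ?cfg ` carrier G"
    by (rule Con_eq_image_configuration[OF g_in part])
  moreover have "finite (Con G g E m)" using ell by (metis card.infinite zero_neq_numeral)
  ultimately have "ordered_subsystem_3 G ?cfg p (\<lambda>i. A (\<pi> i)) (\<lambda>i. B (\<pi> i)) h"
    using ell one_entry
    by (intro ordered_subsystem_3.intro ordered_subsystem_3_axioms.intro) simp_all
  then have "complete_paradoxical G 3 2" by (rule ordered_subsystem_3.complete_paradoxical_3_2)
  then show ?thesis by (rule tarski_number_eq_5[OF nofree])
qed

end
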